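(* Let $G=(V,E)$ be a word-representable graph with $n=|V|$ and representation number $k$. Unless $G$ is a circle graph containing $K_{n-1}$ as an induced subgraph, $G$ is $\left(\lceil kn/2\rceil-1\right)$-complete square-free uniform word-representable.
   Context: A graph $G=(V,E)$ is word-representable if there is a word $w$ over $V$, containing every letter of $V$, such that distinct $x,y\in V$ alternate in $w$ (deleting all other letters yields $xyxy\cdots$ or $yxyx\cdots$) iff $xy\in E$; $w$ represents $G$. A word is $k$-uniform if every letter occurs exactly $k$ times, and uniform if it is $k$-uniform for some $k$. The representation number of a word-representable graph is the least $k$ such that it is represented by a $k$-uniform word. For a word $w$ over $\Sigma$ and $S\subseteq\Sigma$, $w_S$ denotes the word obtained from $w$ by deleting all letters not in $S$. For an integer $p\ge1$, $w$ contains a $p$-complete square if there exists $S\subseteq\Sigma$ such that $w_S$ contains a factor $XX$ with $X\in S^+$ and $|X|\ge p$; otherwise $w$ is $p$-complete square-free. A graph $G$ is $p$-complete square-free uniform word-representable if it is represented by a uniform word $w$ that is $p$-complete square-free. *)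

theory Defs
  imports Complex_Main
begin

definition simple_graph :: "'a set \<Rightarrow> ('a \<times> 'a) set \<Rightarrow> bool" where
  "simple_graph V E \<longleftrightarrow> finite V \<and> E \<subseteq> V \<times> V \<and> sym E \<and> irrefl E"

text \<open>A word in which no two consecutive letters are equal (i.e. of the form xyxy... or yxyx...
  when only two letters occur).\<close>
definition alternating_list :: "'a list \<Rightarrow> bool" where
  "alternating_list u \<longleftrightarrow> (\<forall>i. Suc i < length u \<longrightarrow> u ! i \<noteq> u ! Suc i)"

definition restrict_word :: "'a list \<Rightarrow> 'a set \<Rightarrow> 'a list" where
  "restrict_word w S = filter (\<lambda>c. c \<in> S) w"

definition alternate_in :: "'a list \<Rightarrow> 'a \<Rightarrow> 'a \<Rightarrow> bool" where
  "alternate_in w x y \<longleftrightarrow> alternating_list (restrict_word w {x, y})"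

definition represents :: "'a set \<Rightarrow> ('a \<times> 'a) set \<Rightarrow> 'a list \<Rightarrow> bool" where
  "represents V E w \<longleftrightarrow> set w = V \<and>
     (\<forall>x\<in>V. \<forall>y\<in>V. x \<noteq> y \<longrightarrow> (alternate_in w x y \<longleftrightarrow> (x, y) \<in> E))"

definition word_representable :: "'a set \<Rightarrow> ('a \<times> 'a) set \<Rightarrow> bool" where
  "word_representable V E \<longleftrightarrow> (\<exists>w. represents V E w)"

definition k_uniform :: "nat \<Rightarrow> 'a list \<Rightarrow> bool" where
  "k_uniform k w \<longleftrightarrow> (\<forall>x\<in>set w. count_list w x = k)"

definition uniform_word :: "'a list \<Rightarrow> bool" where
  "uniform_word w \<longleftrightarrow> (\<exists>k. k_uniform k w)"

definition representation_number :: "'a set \<Rightarrow> ('a \<times> 'a) set \<Rightarrow> nat" where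
  "representation_number V E = (LEAST k. \<exists>w. k_uniform k w \<and> represents V E w)"

definition has_p_complete_square :: "nat \<Rightarrow> 'a list \<Rightarrow> bool" where
  "has_p_complete_square p w \<longleftrightarrow>
     (\<exists>S X u v. X \<noteq> [] \<and> set X \<subseteq> S \<and> length X \<ge> p \<and>
                restrict_word w S = u @ X @ X @ v)"

definition p_complete_square_free :: "nat \<Rightarrow> 'a list \<Rightarrow> bool" where
  "p_complete_square_free p w \<longleftrightarrow> \<not> has_p_complete_square p w"

definition p_csf_uniform_word_representable :: "nat \<Rightarrow> 'a set \<Rightarrow> ('a \<times> 'a) set \<Rightarrow> bool" where
  "p_csf_uniform_word_representable p V E \<longleftrightarrow>
     (\<exists>w. uniform_word w \<and> represents V E w \<and> p_complete_square_free p w)"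

text \<open>Circle graph, combinatorially via chord diagrams: there is a double occurrence word
  (each vertex occurs exactly twice, reading the chord endpoints around the circle) such that
  two vertices are adjacent iff their chords cross, i.e. iff they interleave in the word.\<close>
definition circle_graph :: "'a set \<Rightarrow> ('a \<times> 'a) set \<Rightarrow> bool" where
  "circle_graph V E \<longleftrightarrow> (\<exists>w. set w = V \<and> (\<forall>x\<in>V. count_list w x = 2) \<and>
     (\<forall>x\<in>V. \<forall>y\<in>V. x \<noteq> y \<longrightarrow> (alternate_in w x y \<longleftrightarrow> (x, y) \<in> E)))"

definition contains_induced_clique :: "'a set \<Rightarrow> ('a \<times> 'a) set \<Rightarrow> nat \<Rightarrow> bool" where
  "contains_induced_clique V E m \<longleftrightarrow>
     (\<exists>U\<subseteq>V. card U = m \<and> (\<forall>x\<in>U. \<forall>y\<in>U. x \<noteq> y \<longrightarrow> (x, y) \<in> E))"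

end

theory Submission
  imports Defs
begin

text \<open>Let w be a k-uniform word representing G with k minimal, and suppose that w_S has a
  factor XX with |X| \<ge> \<lceil>kn/2\<rceil> - 1, so that at most two letters of w_S lie outside XX.
  If S misses a vertex, counting forces k = 2 and w_S = XX, so G is a circle graph in which S
  spans a clique on n - 1 vertices. Otherwise w = uXXv with |uv| \<le> 2, and parity forces uv to be
  empty or aa. If it is empty, X alone represents G with k/2 copies of each letter. If it is aa,
  then a alternates with no other vertex, while any two other vertices alternate in w iff they
  do in X; so either k = 2 and the other vertices form a clique, or a^(k/2) followed by
  X without a is a smaller uniform representant.\<close>

lemma alternating_list_Nil [simp]: "alternating_list []"
  by (simp add: alternating_list_def)

lemma alternating_list_singleton [simp]: "alternating_list [x]"
  by (simp add: alternating_list_def)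

lemma alternating_list_Cons_Cons [simp]:
  "alternating_list (x # y # zs) \<longleftrightarrow> x \<noteq> y \<and> alternating_list (y # zs)"
proof -
  have split: "(\<forall>i. P i) \<longleftrightarrow> P 0 \<and> (\<forall>i. P (Suc i))" for P :: "nat \<Rightarrow> bool"
    by (metis not0_implies_Suc)
  show ?thesis unfolding alternating_list_def by (subst split) simp
qed

lemma alternating_list_Cons:
  "alternating_list (x # L) \<longleftrightarrow> alternating_list L \<and> (L = [] \<or> hd L \<noteq> x)"
  by (cases L) auto

lemma alternating_list_append:
  "alternating_list (xs @ ys) \<longleftrightarrow>
     alternating_list xs \<and> alternating_list ys \<and> (xs = [] \<or> ys = [] \<or> last xs \<noteq> hd ys)"
  by (induction xs) (auto simp: alternating_list_Cons)

lemma distinct_imp_alternating_list: "distinct L \<Longrightarrow> alternating_list L"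
  by (induction L) (auto simp: alternating_list_Cons dest: hd_in_set)

lemma alternating_list_count_hd:
  assumes "alternating_list L" "L \<noteq> []" "set L \<subseteq> {hd L, z}" "z \<noteq> hd L"
  shows "count_list L (hd L) = count_list L z + (if last L = hd L then 1 else 0)"
  using assms
proof (induction L arbitrary: z)
  case Nil
  then show ?case by simp
next
  case (Cons x L)
  show ?case
  proof (cases L)
    case Nil
    with Cons.prems show ?thesis by simp
  next
    case (Cons y L')
    with Cons.prems have "y = z" by auto
    with Cons.prems \<open>L = y # L'\<close> have "alternating_list L" "hd L = z" "set L \<subseteq> {hd L, x}"
      by auto
    with Cons.IH[of x] Cons.prems \<open>L = y # L'\<close> show ?thesis
      by (auto dest: last_in_set)
  qed
qed

lemma alternating_list_last_eq_hd_iff: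
  assumes "alternating_list L" "L \<noteq> []" "set L \<subseteq> {x, y}" "x \<noteq> y"
  shows "last L = hd L \<longleftrightarrow> count_list L x \<noteq> count_list L y"
proof -
  have "hd L \<in> {x, y}" using assms hd_in_set by blast
  then consider "hd L = x" | "hd L = y" by blast
  then show ?thesis
  proof cases
    case 1
    with alternating_list_count_hd[OF assms(1,2), of y] assms(3,4) show ?thesis by simp
  next
    case 2
    with alternating_list_count_hd[OF assms(1,2), of x] assms(3,4) show ?thesis
      by (simp add: insert_commute)
  qed
qed

lemma alternating_list_square_iff:
  assumes "L \<noteq> []" "set L \<subseteq> {x, y}" "x \<noteq> y"
  shows "alternating_list (L @ L) \<longleftrightarrow> alternating_list L \<and> count_list L x = count_list L y"
  using alternating_list_last_eq_hd_iff[OF _ assms(1-3)] assms(1)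
  by (auto simp: alternating_list_append)

lemma distinct_if_count_list_le_one: "(\<And>z. count_list L z \<le> 1) \<Longrightarrow> distinct L"
proof (induction L)
  case Nil
  then show ?case by simp
next
  case (Cons x L)
  from Cons.prems[of x] have "x \<notin> set L" by (simp add: count_list_0_iff)
  moreover have "count_list L z \<le> 1" for z using Cons.prems[of z] by (simp split: if_splits)
  ultimately show ?case using Cons.IH by simp
qed

lemma count_list_replicate: "count_list (replicate m a) y = (if y = a then m else 0)"
  by (induction m) auto

lemma restrict_word_Nil [simp]: "restrict_word [] S = []"
  by (simp add: restrict_word_def)

lemma restrict_word_Cons [simp]:
  "restrict_word (x # w) S = (if x \<in> S then x # restrict_word w S else restrict_word w S)"
  by (simp add: restrict_word_def)

lemma restrict_word_append [simp]:
  "restrict_word (u @ v) S = restrict_word u S @ restrict_word v S"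
  by (simp add: restrict_word_def)

lemma set_restrict_word [simp]: "set (restrict_word w S) = set w \<inter> S"
  by (auto simp: restrict_word_def)

lemma count_list_restrict_word [simp]:
  "count_list (restrict_word w S) y = (if y \<in> S then count_list w y else 0)"
  by (induction w) auto

lemma restrict_word_restrict_word [simp]:
  "restrict_word (restrict_word w S) T = restrict_word w (S \<inter> T)"
  by (simp add: restrict_word_def)

lemma restrict_word_eq_Nil_iff: "restrict_word w S = [] \<longleftrightarrow> set w \<inter> S = {}"
  by (auto simp: restrict_word_def filter_empty_conv)

lemma restrict_word_Int_set: "restrict_word w (set w \<inter> S) = restrict_word w S"
  unfolding restrict_word_def by (rule filter_cong) auto

lemma restrict_word_superset: "set w \<subseteq> S \<Longrightarrow> restrict_word w S = w"
  by (simp add: restrict_word_def subset_iff)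

lemma length_restrict_word_k_uniform:
  assumes "k_uniform k w" "T \<subseteq> set w"
  shows "length (restrict_word w T) = k * card T"
proof -
  have "length (restrict_word w T) = (\<Sum>y\<in>T. count_list (restrict_word w T) y)"
    using assms(2) by (intro sum_count_set[symmetric]) (auto intro: finite_subset)
  also have "\<dots> = (\<Sum>y\<in>T. k)"
    using assms by (intro sum.cong) (auto simp: k_uniform_def)
  finally show ?thesis by simp
qed

lemma alternate_in_commute: "alternate_in w x y \<longleftrightarrow> alternate_in w y x"
  by (simp add: alternate_in_def insert_commute)

lemma alternate_in_restrict_word:
  "x \<in> T \<Longrightarrow> y \<in> T \<Longrightarrow> alternate_in (restrict_word w T) x y \<longleftrightarrow> alternate_in w x y"
  by (simp add: alternate_in_def Int_absorb1)

lemma alternate_in_append_disjoint: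
  assumes "{x, y} \<inter> set u = {}" "{x, y} \<inter> set v = {}"
  shows "alternate_in (u @ Y @ v) x y \<longleftrightarrow> alternate_in Y x y"
proof -
  have "restrict_word u {x, y} = []" "restrict_word v {x, y} = []"
    using assms by (simp_all add: restrict_word_eq_Nil_iff Int_commute)
  then show ?thesis by (simp add: alternate_in_def)
qed

lemma alternate_in_square_iff:
  assumes "x \<noteq> y" "count_list X x = count_list X y" "0 < count_list X x"
  shows "alternate_in (X @ X) x y \<longleftrightarrow> alternate_in X x y"
proof -
  have "x \<in> set X" using assms(3) by (metis count_notin less_irrefl)
  then have "restrict_word X {x, y} \<noteq> []" by (auto simp: restrict_word_eq_Nil_iff)
  with alternating_list_square_iff[of "restrict_word X {x, y}" x y] assms show ?thesis
    by (simp add: alternate_in_def)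
qed

lemma not_alternate_in_square:
  assumes "count_list X y = Suc (count_list X x)"
  shows "\<not> alternate_in (u @ X @ X @ v) x y"
proof
  define R where "R = restrict_word X {x, y}"
  assume "alternate_in (u @ X @ X @ v) x y"
  then have "alternating_list (restrict_word u {x, y} @ (R @ R) @ restrict_word v {x, y})"
    by (simp add: alternate_in_def R_def)
  then have "alternating_list (R @ R)" by (simp only: alternating_list_append)
  moreover have "y \<in> set X" using assms by (metis count_notin zero_less_Suc less_irrefl)
  then have "R \<noteq> []" by (auto simp: R_def restrict_word_eq_Nil_iff)
  moreover have "x \<noteq> y" "set R \<subseteq> {x, y}" "count_list R x \<noteq> count_list R y"
    using assms by (auto simp: R_def)
  ultimately show False using alternating_list_square_iff by metis
qed

lemma alternate_in_if_count_list_le_one: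
  assumes "count_list X x \<le> 1" "count_list X y \<le> 1"
  shows "alternate_in X x y"
proof -
  have "count_list (restrict_word X {x, y}) z \<le> 1" for z using assms by auto
  then show ?thesis
    unfolding alternate_in_def by (intro distinct_imp_alternating_list distinct_if_count_list_le_one)
qed

lemma latest_first_occurrence:
  assumes "finite A" "A \<noteq> {}" "A \<subseteq> set w"
  shows "\<exists>x\<in>A. \<exists>pre suf. w = pre @ x # suf \<and> x \<notin> set pre \<and> A - {x} \<subseteq> set pre"
  using assms
proof (induction w rule: rev_induct)
  case Nil
  then show ?case by auto
next
  case (snoc z w)
  show ?case
  proof (cases "A \<subseteq> set w")
    case True
    then obtain x pre suf where "x \<in> A" "w = pre @ x # suf" "x \<notin> set pre" "A - {x} \<subseteq> set pre"
      using snoc by blast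
    then show ?thesis by (intro bexI[of _ x] exI[of _ pre] exI[of _ "suf @ [z]"]) auto
  next
    case False
    with snoc.prems have "z \<in> A" "A - {z} \<subseteq> set w" by auto
    with False show ?thesis by (intro bexI[of _ z] exI[of _ w] exI[of _ "[]"]) auto
  qed
qed

text \<open>Prepending x can only break alternation with a letter y whose restriction to {x, y}
  starts with x, that is, one at most as frequent as x and occurring first after x; the choice of x
  rules such letters out.\<close>

lemma represents_Cons_least_frequent:
  assumes rep: "represents V E w" and w: "w = pre @ x # suf" and "x \<notin> set pre"
    and least: "\<forall>y\<in>V. count_list w x \<le> count_list w y"
    and earlier: "\<forall>y\<in>V. count_list w y = count_list w x \<longrightarrow> y \<noteq> x \<longrightarrow> y \<in> set pre"
  shows "represents V E (x # w)"
proof -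
  have "x \<in> V" using rep w by (auto simp: represents_def)
  have "alternate_in (x # w) y z \<longleftrightarrow> alternate_in w y z" if "y \<in> V" "z \<in> V" "y \<noteq> z" for y z
  proof (cases "x \<in> {y, z}")
    case False
    then show ?thesis by (simp add: alternate_in_def)
  next
    case True
    define y' where "y' = (if x = y then z else y)"
    have y': "{y, z} = {x, y'}" "y' \<in> V" "y' \<noteq> x" using True that by (auto simp: y'_def)
    define R where "R = restrict_word w {x, y'}"
    have "R \<noteq> []" using w by (auto simp: R_def restrict_word_eq_Nil_iff)
    have "hd R \<noteq> x" if "alternating_list R"
    proof
      assume "hd R = x"
      with alternating_list_count_hd[OF that \<open>R \<noteq> []\<close>, of y'] y'
      have "count_list w y' \<le> count_list w x" by (auto simp: R_def)
      with least y' have "y' \<in> set pre" using earlier by force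
      then have "restrict_word pre {x, y'} \<noteq> []" by (auto simp: restrict_word_eq_Nil_iff)
      then have "hd R \<in> set (restrict_word pre {x, y'})" by (simp add: R_def w hd_append del: set_restrict_word)
      with \<open>x \<notin> set pre\<close> have "hd R = y'" by auto
      with \<open>hd R = x\<close> y' show False by simp
    qed
    then show ?thesis
      using \<open>R \<noteq> []\<close> y' by (auto simp: alternate_in_def R_def alternating_list_Cons)
  qed
  with rep \<open>x \<in> V\<close> show ?thesis by (auto simp: represents_def)
qed

lemma represents_padded_to_uniform:
  assumes "finite V" "represents V E w" "\<forall>y\<in>V. count_list w y \<le> M"
  shows "\<exists>w'. k_uniform M w' \<and> represents V E w'"
  using assms(2,3)
proof (induction "\<Sum>y\<in>V. M - count_list w y" arbitrary: w rule: less_induct)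
  case less
  have "set w = V" using less.prems by (simp add: represents_def)
  show ?case
  proof (cases "\<forall>y\<in>V. count_list w y = M")
    case True
    with less.prems \<open>set w = V\<close> show ?thesis by (auto simp: k_uniform_def)
  next
    case False
    with less.prems obtain y0 where "y0 \<in> V" "count_list w y0 < M" by force
    define c where "c = Min (count_list w ` V)"
    have c_le: "\<forall>y\<in>V. c \<le> count_list w y" using assms(1) by (simp add: c_def)
    have "c \<in> count_list w ` V" using assms(1) \<open>y0 \<in> V\<close> unfolding c_def by (intro Min_in) auto
    have "c < M" using c_le \<open>y0 \<in> V\<close> \<open>count_list w y0 < M\<close> by force
    define A where "A = {y\<in>V. count_list w y = c}"
    have "finite A" "A \<noteq> {}" "A \<subseteq> set w"
      using assms(1) \<open>c \<in> count_list w ` V\<close> \<open>set w = V\<close> by (auto simp: A_def)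
    then obtain x pre suf where x: "x \<in> A" "w = pre @ x # suf" "x \<notin> set pre" "A - {x} \<subseteq> set pre"
      using latest_first_occurrence by metis
    then have "x \<in> V" "count_list w x = c" by (auto simp: A_def)
    have "represents V E (x # w)"
      using represents_Cons_least_frequent[OF less.prems(1) x(2,3)] c_le x(4)
      by (auto simp: A_def \<open>count_list w x = c\<close>)
    moreover have "\<forall>y\<in>V. count_list (x # w) y \<le> M"
      using less.prems(2) \<open>c < M\<close> \<open>count_list w x = c\<close> by auto
    moreover have "(\<Sum>y\<in>V. M - count_list (x # w) y) < (\<Sum>y\<in>V. M - count_list w y)"
      using assms(1) \<open>x \<in> V\<close> \<open>c < M\<close> \<open>count_list w x = c\<close>
      by (intro sum_strict_mono_ex1) auto
    ultimately show ?thesis using less.hyps by blast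
  qed
qed

lemma uniform_representation_exists:
  assumes "finite V" "represents V E w"
  shows "\<exists>k w'. k_uniform k w' \<and> represents V E w'"
  using represents_padded_to_uniform[OF assms, of "Max (count_list w ` V)"] assms(1) by auto

lemma representation_number_attained:
  assumes "finite V" "word_representable V E"
  shows "\<exists>w. k_uniform (representation_number V E) w \<and> represents V E w"
proof -
  obtain w where "represents V E w" using assms(2) by (auto simp: word_representable_def)
  with uniform_representation_exists[OF assms(1)] have "\<exists>k w. k_uniform k w \<and> represents V E w"
    by blast
  then show ?thesis unfolding representation_number_def by (rule LeastI_ex)
qed

lemma representation_number_le:
  "k_uniform k w \<Longrightarrow> represents V E w \<Longrightarrow> representation_number V E \<le> k"
  unfolding representation_number_def by (blast intro: Least_le)

lemma ceiling_half_bound: "m \<le> 2 * nat (\<lceil>real m / 2\<rceil> - 1) + 2"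
proof -
  have "real m / 2 \<le> of_int \<lceil>real m / 2\<rceil>" by (rule le_of_int_ceiling)
  then have "int m \<le> 2 * \<lceil>real m / 2\<rceil>" by linarith
  then show ?thesis by linarith
qed

lemma k_uniform_1_distinct:
  assumes "k_uniform 1 w"
  shows "distinct w"
proof (rule distinct_if_count_list_le_one)
  fix z
  show "count_list w z \<le> 1" using assms by (cases "z \<in> set w") (auto simp: k_uniform_def)
qed

lemma distinct_no_square:
  assumes "distinct w" "X \<noteq> []"
  shows "restrict_word w S \<noteq> u @ X @ X @ v"
proof
  assume "restrict_word w S = u @ X @ X @ v"
  moreover have "distinct (restrict_word w S)" using assms(1) by (simp add: restrict_word_def)
  ultimately show False using assms(2) by (cases X) auto
qed

lemma circle_graph_if_2_uniform_representation:
  "k_uniform 2 w \<Longrightarrow> represents V E w \<Longrightarrow> circle_graph V E"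
  unfolding circle_graph_def k_uniform_def represents_def by blast

lemma long_square_in_proper_restriction:
  assumes "k_uniform k w" "2 \<le> k" "\<not> set w \<subseteq> S" "restrict_word w S = u @ X @ X @ v"
    and "k * card (set w) \<le> 2 * length X + 2"
  shows "k = 2 \<and> card (set w \<inter> S) = card (set w) - 1 \<and> restrict_word w S = X @ X"
proof -
  define n where "n = card (set w)"
  define T where "T = set w \<inter> S"
  have "length (restrict_word w S) = k * card T"
    using length_restrict_word_k_uniform[OF assms(1), of T] by (simp add: T_def restrict_word_Int_set)
  then have len: "length u + 2 * length X + length v = k * card T" using assms(4) by simp
  have "card T < n" unfolding T_def n_def using assms(3) by (intro psubset_card_mono) auto
  then have "k * card T \<le> k * (n - 1)" by (intro mult_le_mono2) simp
  moreover have "k * (n - 1) = k * n - k" "k \<le> k * n"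
    using \<open>card T < n\<close> by (simp_all add: right_diff_distrib')
  ultimately have "k = 2" using len assms(2,5) unfolding n_def by linarith
  with len assms(5) have "2 * n \<le> 2 * length X + 2" "length u + 2 * length X + length v = 2 * card T"
    unfolding n_def by simp_all
  with \<open>card T < n\<close> have "card T = n - 1" "length u + length v = 0" by linarith+
  then have "u = []" "v = []" by simp_all
  with assms(4) \<open>k = 2\<close> \<open>card T = n - 1\<close> show ?thesis by (simp add: T_def n_def)
qed

lemma alternate_in_if_2_uniform_square:
  assumes "k_uniform 2 w" "restrict_word w S = X @ X" "x \<in> set w \<inter> S" "y \<in> set w \<inter> S" "x \<noteq> y"
  shows "alternate_in w x y"
proof -
  have "count_list X z = 1" if "z \<in> set w \<inter> S" for z
    using arg_cong[OF assms(2), of "\<lambda>r. count_list r z"] assms(1) that by (simp add: k_uniform_def)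
  with assms(3-5) have "alternate_in (X @ X) x y"
    by (simp add: alternate_in_square_iff alternate_in_if_count_list_le_one)
  with assms(2-4) show ?thesis by (metis IntD2 alternate_in_restrict_word)
qed

lemma near_clique_if_long_proper_square:
  assumes "represents V E w" "k_uniform k w" "2 \<le> k" "\<not> V \<subseteq> S"
    and "restrict_word w S = u @ X @ X @ v" "k * card V \<le> 2 * length X + 2"
  shows "k = 2 \<and> contains_induced_clique V E (card V - 1)"
proof -
  have "set w = V" using assms(1) by (simp add: represents_def)
  with long_square_in_proper_restriction[OF assms(2,3)] assms(4-6)
  have "k = 2" "card (V \<inter> S) = card V - 1" "restrict_word w S = X @ X" by auto
  have "(x, y) \<in> E" if "x \<in> V \<inter> S" "y \<in> V \<inter> S" "x \<noteq> y" for x y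
  proof -
    from that \<open>set w = V\<close> have "alternate_in w x y"
      using alternate_in_if_2_uniform_square[OF _ \<open>restrict_word w S = X @ X\<close>] assms(2) \<open>k = 2\<close>
      by simp
    with assms(1) that show ?thesis by (simp add: represents_def)
  qed
  with \<open>k = 2\<close> \<open>card (V \<inter> S) = card V - 1\<close> show ?thesis
    unfolding contains_induced_clique_def by blast
qed

lemma even_counts_length_le_2:
  assumes "length L \<le> 2" "\<And>y. even (count_list L y)"
  shows "L = [] \<or> (\<exists>a. L = [a, a])"
proof (cases L rule: remdups_adj.cases)
  case (2 x)
  with assms(2)[of x] show ?thesis by simp
next
  case (3 x y zs)
  with assms have "zs = []" by simp
  with 3 assms(2)[of x] show ?thesis by (auto split: if_splits)
qed simp

lemma uniform_square_residue:
  assumes "k_uniform k (u @ X @ X @ v)" "length (u @ v) \<le> 2" "3 \<le> card (set (u @ X @ X @ v))"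
  shows "u @ v = [] \<or> (\<exists>a. u @ v = [a, a])"
proof -
  define w where "w = u @ X @ X @ v"
  have "card (set (u @ v)) < card (set w)"
    using card_length[of "u @ v"] assms(2,3) by (simp add: w_def)
  then obtain c where "c \<in> set w" "c \<notin> set (u @ v)" by (metis card_mono finite_set not_le subsetI)
  moreover from \<open>c \<in> set w\<close> have "count_list w c = k"
    using assms(1) by (simp add: k_uniform_def w_def)
  ultimately have "k = 2 * count_list X c" by (simp add: w_def)
  moreover have "count_list (u @ v) y + 2 * count_list X y = count_list w y" for y
    by (simp add: w_def)
  moreover have "count_list w y = (if y \<in> set w then k else 0)" for y
    using assms(1)[folded w_def] by (simp add: k_uniform_def)
  ultimately have "even (count_list (u @ v) y + 2 * count_list X y)" for y by simp
  then have "even (count_list (u @ v) y)" for y by simp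
  with even_counts_length_le_2 assms(2) show ?thesis by blast
qed

lemma k_uniform_square: "k_uniform k (X @ X) \<Longrightarrow> k_uniform (k div 2) X"
  by (auto simp: k_uniform_def)

lemma represents_square_root:
  assumes "represents V E (X @ X)" "k_uniform m X"
  shows "represents V E X"
proof -
  have "0 < m" if "x \<in> set X" for x
    using that assms(2) by (metis k_uniform_def count_list_0_iff gr0I)
  then have "alternate_in (X @ X) x y \<longleftrightarrow> alternate_in X x y" if "x \<in> set X" "y \<in> set X" "x \<noteq> y" for x y
    using that assms(2) by (intro alternate_in_square_iff) (auto simp: k_uniform_def)
  with assms(1) show ?thesis by (auto simp: represents_def)
qed

lemma count_list_doubled_letter_square:
  assumes "k_uniform k w" "w = u @ X @ X @ v" "u @ v = [a, a]" "z \<in> set w"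
  shows "2 * count_list X z + (if z = a then 2 else 0) = k"
proof -
  have "count_list w z = k" using assms(1,4) by (simp add: k_uniform_def)
  moreover have "count_list (u @ v) z = (if z = a then 2 else 0)" using assms(3) by simp
  ultimately show ?thesis using assms(2) by auto
qed

lemma alternate_in_doubled_letter_square:
  assumes "k_uniform k w" "w = u @ X @ X @ v" "u @ v = [a, a]"
    and "x \<in> set w" "y \<in> set w" "x \<noteq> y"
  shows "alternate_in w x y \<longleftrightarrow> x \<noteq> a \<and> y \<noteq> a \<and> alternate_in X x y"
proof -
  have "set u \<subseteq> {a}" "set v \<subseteq> {a}" "a \<in> set w"
    using arg_cong[OF assms(3), of set] assms(2) by auto
  note cnt = count_list_doubled_letter_square[OF assms(1-3)]
  have "\<not> alternate_in w a z" if "z \<in> set w" "z \<noteq> a" for z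
  proof -
    have "count_list X z = Suc (count_list X a)"
      using cnt[OF that(1)] cnt[OF \<open>a \<in> set w\<close>] that(2) by simp
    then show ?thesis using not_alternate_in_square assms(2) by metis
  qed
  moreover have "alternate_in w x y \<longleftrightarrow> alternate_in X x y" if "x \<noteq> a" "y \<noteq> a"
  proof -
    have "alternate_in (u @ (X @ X) @ v) x y \<longleftrightarrow> alternate_in (X @ X) x y"
      using \<open>set u \<subseteq> {a}\<close> \<open>set v \<subseteq> {a}\<close> that by (intro alternate_in_append_disjoint) auto
    then have "alternate_in w x y \<longleftrightarrow> alternate_in (X @ X) x y" using assms(2) by simp
    also have "\<dots> \<longleftrightarrow> alternate_in X x y"
      using cnt[OF assms(4)] cnt[OF assms(5)] cnt[OF \<open>a \<in> set w\<close>] that assms(6)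
      by (intro alternate_in_square_iff) auto
    finally show ?thesis .
  qed
  ultimately show ?thesis using assms(4-6) alternate_in_commute by metis
qed

lemma near_clique_if_doubled_letter_square:
  assumes "represents V E w" "k_uniform 2 w" "w = u @ X @ X @ v" "u @ v = [a, a]"
  shows "contains_induced_clique V E (card V - 1)"
proof -
  have "set w = V" using assms(1) by (simp add: represents_def)
  have "a \<in> V" using arg_cong[OF assms(4), of set] assms(3) \<open>set w = V\<close> by auto
  have "count_list X z \<le> 1" for z
    using count_list_doubled_letter_square[OF assms(2-4), of z] assms(3)
    by (cases "z \<in> set w") auto
  have "(x, y) \<in> E" if "x \<in> V - {a}" "y \<in> V - {a}" "x \<noteq> y" for x y
  proof -
    have "alternate_in X x y" by (rule alternate_in_if_count_list_le_one) fact+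
    with that \<open>set w = V\<close> have "alternate_in w x y"
      using alternate_in_doubled_letter_square[OF assms(2-4)] by simp
    with assms(1) that show ?thesis by (simp add: represents_def)
  qed
  moreover have "card (V - {a}) = card V - 1"
    using \<open>a \<in> V\<close> \<open>set w = V\<close> by (metis card_Diff_singleton finite_set)
  ultimately show ?thesis
    unfolding contains_induced_clique_def by (intro exI[of _ "V - {a}"]) auto
qed

lemma smaller_representation_if_doubled_letter_square:
  assumes "represents V E w" "k_uniform (2 * m) w" "w = u @ X @ X @ v" "u @ v = [a, a]" "2 \<le> m"
  shows "\<exists>W. k_uniform m W \<and> represents V E W"
proof -
  define W where "W = replicate m a @ restrict_word X (V - {a})"
  have "set w = V" using assms(1) by (simp add: represents_def)
  have "a \<in> V" using arg_cong[OF assms(4), of set] assms(3) \<open>set w = V\<close> by auto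
  note cnt = count_list_doubled_letter_square[OF assms(2-4), unfolded \<open>set w = V\<close>]
  have count_W: "count_list W y = m" if "y \<in> V" for y
    using that cnt[OF that] by (auto simp: W_def count_list_replicate)
  have "set W = V"
  proof
    show "set W \<subseteq> V" using \<open>a \<in> V\<close> by (auto simp: W_def)
    show "V \<subseteq> set W" using count_W assms(5) by (metis count_notin not_numeral_le_zero subsetI)
  qed
  have "alternate_in W x y \<longleftrightarrow> x \<noteq> a \<and> y \<noteq> a \<and> alternate_in X x y"
    if "x \<in> V" "y \<in> V" "x \<noteq> y" for x y
  proof (cases "a \<in> {x, y}")
    case True
    obtain j where "m = Suc (Suc j)" using assms(5) by (metis add_2_eq_Suc le_Suc_ex)
    with True show ?thesis by (auto simp: alternate_in_def W_def)
  next
    case False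
    with that have "(V - {a}) \<inter> {x, y} = {x, y}" by auto
    moreover have "restrict_word (replicate m a) {x, y} = []"
      using False by (auto simp: restrict_word_eq_Nil_iff)
    ultimately show ?thesis using False by (auto simp: alternate_in_def W_def)
  qed
  with alternate_in_doubled_letter_square[OF assms(2-4)] assms(1) \<open>set w = V\<close> \<open>set W = V\<close>
  have "represents V E W" unfolding represents_def by auto
  with count_W \<open>set W = V\<close> show ?thesis by (auto simp: k_uniform_def)
qed

lemma long_full_square_cases:
  assumes "represents V E w" "k_uniform k w" "w = u @ X @ X @ v" "length (u @ v) \<le> 2" "3 \<le> card V"
  shows "(\<exists>j w'. j < k \<and> k_uniform j w' \<and> represents V E w') \<or>
    (k = 2 \<and> contains_induced_clique V E (card V - 1))"
proof -
  have "set w = V" using assms(1) by (simp add: represents_def)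
  with assms uniform_square_residue consider "u @ v = []" | a where "u @ v = [a, a]" by metis
  then show ?thesis
  proof cases
    case 1
    then have "w = X @ X" using assms(3) by simp
    obtain y where "y \<in> set w" using assms(5) \<open>set w = V\<close> by fastforce
    with assms(2) have "count_list w y = k" by (simp add: k_uniform_def)
    with \<open>y \<in> set w\<close> have "0 < k" by (metis count_list_0_iff gr0I)
    then have "k div 2 < k" by simp
    moreover have "k_uniform (k div 2) X" using assms(2) \<open>w = X @ X\<close> by (simp add: k_uniform_square)
    moreover have "represents V E X"
      using assms(1) \<open>w = X @ X\<close> represents_square_root calculation(2) by blast
    ultimately show ?thesis by blast
  next
    case (2 a)
    have "a \<in> set (u @ v)" using 2 by simp
    then have "a \<in> set w" using assms(3) by auto
    define m where "m = count_list X a + 1"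
    have "k = 2 * m"
      using count_list_doubled_letter_square[OF assms(2,3) 2 \<open>a \<in> set w\<close>] by (simp add: m_def)
    show ?thesis
    proof (cases "m = 1")
      case True
      with \<open>k = 2 * m\<close> near_clique_if_doubled_letter_square[OF assms(1) _ assms(3) 2] assms(2)
      show ?thesis by simp
    next
      case False
      then have "2 \<le> m" by (simp add: m_def)
      with \<open>k = 2 * m\<close> assms(2) obtain W where "k_uniform m W" "represents V E W"
        using smaller_representation_if_doubled_letter_square[OF assms(1) _ assms(3) 2] by blast
      moreover have "m < k" using \<open>k = 2 * m\<close> \<open>2 \<le> m\<close> by simp
      ultimately show ?thesis by blast
    qed
  qed
qed

lemma minimal_uniform_representation_square_free:
  assumes "k_uniform k w" "represents V E w" "\<And>j w'. k_uniform j w' \<Longrightarrow> represents V E w' \<Longrightarrow> k \<le> j"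
    and "3 \<le> card V" "\<not> (circle_graph V E \<and> contains_induced_clique V E (card V - 1))"
  shows "p_complete_square_free (nat (\<lceil>real (k * card V) / 2\<rceil> - 1)) w"
  unfolding p_complete_square_free_def has_p_complete_square_def
proof (intro notI, elim exE conjE)
  fix S X u v
  assume "X \<noteq> []" "nat (\<lceil>real (k * card V) / 2\<rceil> - 1) \<le> length X"
    and square: "restrict_word w S = u @ X @ X @ v"
  with ceiling_half_bound[of "k * card V"] have long: "k * card V \<le> 2 * length X + 2" by linarith
  have "set w = V" using assms(2) by (simp add: represents_def)
  obtain y where "y \<in> set w" using assms(4) \<open>set w = V\<close> by fastforce
  with assms(1) have "0 < k" by (metis k_uniform_def count_list_0_iff gr0I)
  have no_near_clique: "\<not> (k = 2 \<and> contains_induced_clique V E (card V - 1))"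
    using assms(1,2,5) circle_graph_if_2_uniform_representation by blast
  show False
  proof (cases "k = 1")
    case True
    with assms(1) \<open>X \<noteq> []\<close> square show False by (metis k_uniform_1_distinct distinct_no_square)
  next
    case False
    with \<open>0 < k\<close> have "2 \<le> k" by simp
    show False
    proof (cases "V \<subseteq> S")
      case True
      with square \<open>set w = V\<close> have "w = u @ X @ X @ v" by (simp add: restrict_word_superset)
      moreover have "length w = k * card V"
        using length_restrict_word_k_uniform[OF assms(1), of "set w"] \<open>set w = V\<close>
        by (simp add: restrict_word_superset)
      ultimately have "length (u @ v) \<le> 2" using long by simp
      with long_full_square_cases[OF assms(2,1) \<open>w = u @ X @ X @ v\<close> _ assms(4)] assms(3) no_near_clique
      show False by (meson not_le)
    next
      case False
      with near_clique_if_long_proper_square[OF assms(2,1) \<open>2 \<le> k\<close> _ square long] no_near_clique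
      show False by blast
    qed
  qed
qed

lemma circle_graph_if_card_le_2:
  assumes "simple_graph V E" "card V \<le> 2"
  shows "circle_graph V E"
proof -
  have "finite V" "sym E" using assms(1) by (simp_all add: simple_graph_def)
  have pair: "circle_graph {b, c} E" if "b \<noteq> c" for b c
  proof (cases "(b, c) \<in> E")
    case True
    with \<open>sym E\<close> that show ?thesis unfolding circle_graph_def
      by (intro exI[of _ "[b, c, b, c]"]) (auto simp: alternate_in_def sym_def)
  next
    case False
    with \<open>sym E\<close> that show ?thesis unfolding circle_graph_def
      by (intro exI[of _ "[b, b, c, c]"]) (auto simp: alternate_in_def sym_def)
  qed
  from assms(2) consider "card V = 0" | "card V = 1" | "card V = 2" by linarith
  then show ?thesis
  proof cases
    case 1
    with \<open>finite V\<close> show ?thesis unfolding circle_graph_def by (intro exI[of _ "[]"]) simp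
  next
    case 2
    then obtain a where "V = {a}" by (meson card_1_singletonE)
    then show ?thesis unfolding circle_graph_def by (intro exI[of _ "[a, a]"]) simp
  next
    case 3
    then obtain b c where "V = {b, c}" "b \<noteq> c" by (meson card_2_iff)
    with pair show ?thesis by simp
  qed
qed

lemma near_clique_if_card_le_2:
  assumes "finite V" "card V \<le> 2"
  shows "contains_induced_clique V E (card V - 1)"
proof -
  obtain U where "U \<subseteq> V" "card U = card V - 1" by (meson diff_le_self obtain_subset_with_card_n)
  moreover have "finite U" using \<open>U \<subseteq> V\<close> assms(1) by (rule finite_subset)
  moreover have "card U \<le> 1" using calculation assms(2) by simp
  ultimately show ?thesis
    unfolding contains_induced_clique_def by (metis One_nat_def card_le_Suc0_iff_eq)
qed

theorem mainTheorem10: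
  fixes V :: "'a set" and E :: "('a \<times> 'a) set"
  assumes "simple_graph V E"
    and "V \<noteq> {}"
    and "word_representable V E"
    and "\<not> (circle_graph V E \<and> contains_induced_clique V E (card V - 1))"
  shows "p_csf_uniform_word_representable
           (nat (ceiling (real (representation_number V E * card V) / 2) - 1)) V E"
proof -
  have "finite V" using assms(1) by (simp add: simple_graph_def)
  have "3 \<le> card V"
  proof (rule ccontr)
    assume "\<not> 3 \<le> card V"
    then have "card V \<le> 2" by simp
    with assms(1,4) \<open>finite V\<close> show False
      using circle_graph_if_card_le_2 near_clique_if_card_le_2 by blast
  qed
  obtain w where w: "k_uniform (representation_number V E) w" "represents V E w"
    using representation_number_attained[OF \<open>finite V\<close> assms(3)] by blast
  with minimal_uniform_representation_square_free[OF w _ \<open>3 \<le> card V\<close> assms(4)] representation_number_le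
  show ?thesis unfolding p_csf_uniform_word_representable_def uniform_word_def by blast
qed

end
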